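(* Let $G$ be a finitely generated group and let $A$ be a finite symmetric generating set of $G$. Equip $G$ with the word metric $\delta_A$. Then for every real $r\geqslant 0$ there exists a minimal $r$-net in the metric space $(G,\delta_A)$.
   Context: A set $A\subseteq G$ is symmetric if $A=A^{-1}$. The word metric is $\delta_A(x,y)=$ the least $n\geqslant 0$ such that $x^{-1}y$ is a product of $n$ elements of $A\cup\{1\}$. In a metric space $(X,\delta)$, an $r$-net is a subset $N\subseteq X$ such that for every $x\in X$ there is $z\in N$ with $\delta(x,z)\leqslant r$; a minimal $r$-net is an $r$-net no proper subset of which is an $r$-net. *)

theory Defs
  imports "HOL-Algebra.Algebra"
begin

definition word_prod :: "('a, 'b) monoid_scheme \<Rightarrow> 'a list \<Rightarrow> 'a" where
  "word_prod G xs = foldr (\<lambda>a b. a \<otimes>\<^bsub>G\<^esub> b) xs \<one>\<^bsub>G\<^esub>"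

definition word_dist :: "('a, 'b) monoid_scheme \<Rightarrow> 'a set \<Rightarrow> 'a \<Rightarrow> 'a \<Rightarrow> nat" where
  "word_dist G A x y = (LEAST n. \<exists>xs. set xs \<subseteq> A \<union> {\<one>\<^bsub>G\<^esub>} \<and> length xs = n \<and>
       word_prod G xs = inv\<^bsub>G\<^esub> x \<otimes>\<^bsub>G\<^esub> y)"

definition symmetric_set :: "('a, 'b) monoid_scheme \<Rightarrow> 'a set \<Rightarrow> bool" where
  "symmetric_set G A \<longleftrightarrow> A \<subseteq> carrier G \<and> {m_inv G a | a. a \<in> A} = A"

definition is_net :: "'a set \<Rightarrow> ('a \<Rightarrow> 'a \<Rightarrow> real) \<Rightarrow> real \<Rightarrow> 'a set \<Rightarrow> bool" where
  "is_net S \<delta> \<rho> M \<longleftrightarrow> M \<subseteq> S \<and> (\<forall>x\<in>S. \<exists>z\<in>M. \<delta> x z \<le> \<rho>)"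

definition minimal_net :: "'a set \<Rightarrow> ('a \<Rightarrow> 'a \<Rightarrow> real) \<Rightarrow> real \<Rightarrow> 'a set \<Rightarrow> bool" where
  "minimal_net S \<delta> \<rho> M \<longleftrightarrow> is_net S \<delta> \<rho> M \<and> (\<forall>M'. M' \<subset> M \<longrightarrow> \<not> is_net S \<delta> \<rho> M')"

end

theory Submission
  imports Defs
begin

text \<open>A maximal set whose distinct points are at distance \<open>> r\<close> exists by Zorn's lemma, and it
is a minimal \<open>r\<close>-net: it is a net because any point farther than \<open>r\<close> from all of it could be
added, and it is minimal because each of its points is farther than \<open>r\<close> from all the others.
This needs only that \<open>\<delta>\<^sub>A\<close> is symmetric and vanishes on the diagonal.\<close>

definition separated :: "'a set \<Rightarrow> ('a \<Rightarrow> 'a \<Rightarrow> real) \<Rightarrow> real \<Rightarrow> 'a set \<Rightarrow> bool" where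
  "separated S \<delta> \<rho> M \<longleftrightarrow> M \<subseteq> S \<and> (\<forall>x\<in>M. \<forall>y\<in>M. x \<noteq> y \<longrightarrow> \<rho> < \<delta> x y)"

lemma maximal_separated_exists:
  "\<exists>M. separated S \<delta> \<rho> M \<and> (\<forall>M'. separated S \<delta> \<rho> M' \<longrightarrow> M \<subseteq> M' \<longrightarrow> M' = M)"
proof -
  have "\<Union>C \<in> {M. separated S \<delta> \<rho> M}" if C: "C \<in> chains {M. separated S \<delta> \<rho> M}" for C
    unfolding separated_def
  proof (safe)
    fix x T assume "x \<in> T" "T \<in> C"
    then show "x \<in> S" using C unfolding chains_def separated_def by blast
  next
    fix x y T U assume xy: "x \<in> T" "T \<in> C" "y \<in> U" "U \<in> C" "x \<noteq> y"
    then have "T \<subseteq> U \<or> U \<subseteq> T" using C unfolding chains_def chain_subset_def by blast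
    then show "\<rho> < \<delta> x y" using xy C unfolding chains_def separated_def by blast
  qed
  then show ?thesis using Zorn_Lemma[of "{M. separated S \<delta> \<rho> M}"] by blast
qed

lemma maximal_separated_is_net:
  assumes sep: "separated S \<delta> \<rho> M"
    and max: "\<And>M'. separated S \<delta> \<rho> M' \<Longrightarrow> M \<subseteq> M' \<Longrightarrow> M' = M"
    and sym: "\<And>x y. x \<in> S \<Longrightarrow> y \<in> S \<Longrightarrow> \<delta> x y = \<delta> y x"
    and diag: "\<And>x. x \<in> S \<Longrightarrow> \<delta> x x \<le> \<rho>"
  shows "is_net S \<delta> \<rho> M"
  unfolding is_net_def
proof (intro conjI ballI)
  show MS: "M \<subseteq> S" using sep unfolding separated_def by blast
  fix x assume x: "x \<in> S"
  show "\<exists>z\<in>M. \<delta> x z \<le> \<rho>"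
  proof (rule ccontr)
    assume far: "\<not> (\<exists>z\<in>M. \<delta> x z \<le> \<rho>)"
    then have "x \<notin> M" using diag x by blast
    moreover have "separated S \<delta> \<rho> (insert x M)"
      using sep far sym x MS unfolding separated_def by (auto simp: not_le subset_iff)
    ultimately show False using max[of "insert x M"] by blast
  qed
qed

lemma separated_net_is_minimal:
  assumes sep: "separated S \<delta> \<rho> M" and net: "is_net S \<delta> \<rho> M"
  shows "minimal_net S \<delta> \<rho> M"
  unfolding minimal_net_def
proof (intro conjI allI impI net notI)
  fix M' assume sub: "M' \<subset> M" and net': "is_net S \<delta> \<rho> M'"
  then obtain z where z: "z \<in> M" "z \<notin> M'" by blast
  then obtain w where "w \<in> M'" "\<delta> z w \<le> \<rho>"
    using net' sep unfolding is_net_def separated_def by blast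
  then show False using sep sub z unfolding separated_def by (metis not_le psubsetD)
qed

lemma minimal_net_exists:
  assumes "\<And>x y. x \<in> S \<Longrightarrow> y \<in> S \<Longrightarrow> \<delta> x y = \<delta> y x"
    and "\<And>x. x \<in> S \<Longrightarrow> \<delta> x x \<le> \<rho>"
  shows "\<exists>N. minimal_net S \<delta> \<rho> N"
proof -
  obtain M where sep: "separated S \<delta> \<rho> M"
    and max: "\<forall>M'. separated S \<delta> \<rho> M' \<longrightarrow> M \<subseteq> M' \<longrightarrow> M' = M"
    using maximal_separated_exists by blast
  have "is_net S \<delta> \<rho> M"
    using sep max assms by (intro maximal_separated_is_net) auto
  with sep show ?thesis by (blast intro: separated_net_is_minimal)
qed

context group
begin

lemma word_prod_closed: "set xs \<subseteq> carrier G \<Longrightarrow> word_prod G xs \<in> carrier G"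
  by (induction xs) (auto simp: word_prod_def)

lemma word_prod_append:
  "set xs \<subseteq> carrier G \<Longrightarrow> set ys \<subseteq> carrier G \<Longrightarrow>
    word_prod G (xs @ ys) = word_prod G xs \<otimes> word_prod G ys"
  by (induction xs) (auto simp: word_prod_def word_prod_closed[unfolded word_prod_def] m_assoc)

lemma word_prod_rev_inv:
  "set xs \<subseteq> carrier G \<Longrightarrow> word_prod G (rev (map (m_inv G) xs)) = inv (word_prod G xs)"
proof (induction xs)
  case Nil
  then show ?case by (simp add: word_prod_def)
next
  case (Cons a xs)
  have "word_prod G (rev (map (m_inv G) (a # xs)))
      = word_prod G (rev (map (m_inv G) xs)) \<otimes> word_prod G [inv a]"
    using Cons.prems by simp (rule word_prod_append; auto)
  also have "\<dots> = inv (word_prod G xs) \<otimes> inv a"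
    using Cons by (simp add: word_prod_def)
  also have "\<dots> = inv (word_prod G (a # xs))"
    using Cons.prems word_prod_closed[of xs] by (simp add: word_prod_def inv_mult_group)
  finally show ?case .
qed

lemma word_dist_self: "x \<in> carrier G \<Longrightarrow> word_dist G A x x = 0"
  unfolding word_dist_def by (intro Least_eq_0 exI[of _ "[]"]) (simp add: word_prod_def)

text \<open>Reversing and inverting words identifies the two sets of lengths minimised in
\<open>word_dist\<close>. Comparing the sets, rather than bounding one \<open>LEAST\<close> by the other, avoids
having to show that some word exists.\<close>

lemma word_dist_commute:
  assumes A: "symmetric_set G A" and x: "x \<in> carrier G" and y: "y \<in> carrier G"
  shows "word_dist G A x y = word_dist G A y x"
proof -
  have AG: "A \<subseteq> carrier G" and inv_A: "\<And>a. a \<in> A \<Longrightarrow> inv a \<in> A"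
    using A unfolding symmetric_set_def by blast+
  have reverse: "\<exists>ys. set ys \<subseteq> A \<union> {\<one>} \<and> length ys = n \<and> word_prod G ys = inv v \<otimes> u"
    if xs: "set xs \<subseteq> A \<union> {\<one>}" "length xs = n" "word_prod G xs = inv u \<otimes> v"
      and uv: "u \<in> carrier G" "v \<in> carrier G" for xs n u v
  proof (intro exI conjI)
    show "set (rev (map (m_inv G) xs)) \<subseteq> A \<union> {\<one>}" using xs(1) inv_A by auto
    show "length (rev (map (m_inv G) xs)) = n" using xs(2) by simp
    have "set xs \<subseteq> carrier G" using xs(1) AG by auto
    then show "word_prod G (rev (map (m_inv G) xs)) = inv v \<otimes> u"
      using xs(3) uv by (simp add: word_prod_rev_inv inv_mult_group)
  qed
  have "(\<lambda>n. \<exists>xs. set xs \<subseteq> A \<union> {\<one>} \<and> length xs = n \<and> word_prod G xs = inv x \<otimes> y)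
      = (\<lambda>n. \<exists>xs. set xs \<subseteq> A \<union> {\<one>} \<and> length xs = n \<and> word_prod G xs = inv y \<otimes> x)"
    using reverse x y by (intro ext iffI) (elim exE conjE; blast)+
  then show ?thesis unfolding word_dist_def by simp
qed

end

theorem corollary2p7:
  fixes G :: "('a, 'b) monoid_scheme" and A :: "'a set" and r :: real
  assumes "group G"
    and "finite A"
    and "symmetric_set G A"
    and "generate G A = carrier G"
    and "r \<ge> 0"
  shows "\<exists>N. minimal_net (carrier G) (\<lambda>x y. real (word_dist G A x y)) r N"
  using assms(5) group.word_dist_commute[OF assms(1,3)] group.word_dist_self[OF assms(1)]
  by (intro minimal_net_exists) auto

end
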